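(* For every integer $n\ge3$, $$2^{n-3}=\sum_{(a_1,\dots,a_k)\in C(n)}(F_{a_1}-1)(F_{a_2}-1)\cdots(F_{a_k}-1),$$ where the only nonzero terms come from compositions all of whose parts exceed $2$.
   Context: $C(n)$ is the set of all compositions $(a_1,\dots,a_k)$ of $n$ (sequences of positive integers with sum $n$, any number of parts). Fibonacci numbers: $F_0=0$, $F_1=1$, $F_n=F_{n-1}+F_{n-2}$. *)

theory Defs
  imports Main "HOL-Number_Theory.Fib"
begin

definition compositions :: "nat \<Rightarrow> nat list set" where
  "compositions n = {as. (\<forall>a\<in>set as. 0 < a) \<and> sum_list as = n}"

end

theory Submission
  imports Defs
begin

text \<open>
  Splitting off the first part of a composition shows that the weighted composition sum
  \<open>S n\<close> with weights \<open>g a = F\<^sub>a - 1\<close> is the unique sequence with \<open>S 0 = 1\<close> and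
  \<open>S n = \<Sum>a=1..n. g a * S (n - a)\<close>. It therefore suffices to check that
  \<open>1, 0, 0, 1, 2, 4, 8, \<dots>\<close> satisfies this convolution recurrence, which for \<open>n = m + 3\<close>
  is the Fibonacci identity \<open>(\<Sum>a=1..m. (F\<^sub>a - 1) 2\<^sup>m\<^sup>-\<^sup>a) + F\<^sub>m\<^sub>+\<^sub>3 - 1 = 2\<^sup>m\<close>.
  The summand of a composition vanishes exactly when some part is \<open>1\<close> or \<open>2\<close>, as
  \<open>F\<^sub>1 = F\<^sub>2 = 1\<close> and \<open>F\<^sub>a \<ge> 2\<close> for \<open>a \<ge> 3\<close>.
\<close>

lemma compositions_0: "compositions 0 = {[]}"
  by (auto simp: compositions_def) (metis list.set_intros(1) neq_Nil_conv less_not_refl)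

lemma compositions_Suc:
  "compositions (Suc n) = (\<Union>a\<in>{1..Suc n}. (#) a ` compositions (Suc n - a))"
proof (intro equalityI subsetI)
  fix as assume as: "as \<in> compositions (Suc n)"
  then obtain a l where al: "as = a # l" by (cases as) (auto simp: compositions_def)
  with as have "a \<in> {1..Suc n}" "l \<in> compositions (Suc n - a)"
    by (auto simp: compositions_def)
  with al show "as \<in> (\<Union>a\<in>{1..Suc n}. (#) a ` compositions (Suc n - a))" by blast
qed (auto simp: compositions_def)

lemma finite_compositions: "finite (compositions n)"
proof (induction n rule: less_induct)
  case (less n)
  then show ?case by (cases n) (auto simp: compositions_0 compositions_Suc)
qed

definition composition_sum :: "(nat \<Rightarrow> 'a::comm_semiring_1) \<Rightarrow> nat \<Rightarrow> 'a" where
  "composition_sum f n = (\<Sum>as\<in>compositions n. \<Prod>a\<leftarrow>as. f a)"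

lemma composition_sum_0 [simp]: "composition_sum f 0 = 1"
  by (simp add: composition_sum_def compositions_0)

lemma composition_sum_Suc:
  "composition_sum f (Suc n) = (\<Sum>a=1..Suc n. f a * composition_sum f (Suc n - a))"
proof -
  have "composition_sum f (Suc n) =
      (\<Sum>a=1..Suc n. \<Sum>as\<in>(#) a ` compositions (Suc n - a). \<Prod>x\<leftarrow>as. f x)"
    unfolding composition_sum_def compositions_Suc
    by (rule sum.UNION_disjoint) (auto simp: finite_compositions)
  also have "\<dots> = (\<Sum>a=1..Suc n. \<Sum>as\<in>compositions (Suc n - a). \<Prod>x\<leftarrow>a # as. f x)"
    by (rule sum.cong[OF refl], subst sum.reindex) (auto simp: inj_on_def)
  also have "\<dots> = (\<Sum>a=1..Suc n. f a * composition_sum f (Suc n - a))"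
    by (simp add: composition_sum_def sum_distrib_left)
  finally show ?thesis .
qed

lemma composition_sum_eqI:
  assumes "h 0 = 1"
    and "\<And>n. 0 < n \<Longrightarrow> h n = (\<Sum>a=1..n. f a * h (n - a))"
  shows "composition_sum f n = h n"
proof (induction n rule: less_induct)
  case (less n)
  show ?case
  proof (cases n)
    case 0
    then show ?thesis using assms(1) by simp
  next
    case (Suc m)
    have "composition_sum f n = (\<Sum>a=1..n. f a * h (n - a))"
      unfolding Suc composition_sum_Suc by (intro sum.cong refl) (auto simp: less.IH Suc)
    then show ?thesis using assms(2) Suc by simp
  qed
qed

lemma fib_eq_1_iff: "0 < a \<Longrightarrow> fib a = 1 \<longleftrightarrow> a \<le> 2"
proof (cases "a \<le> 2")
  case False
  then have "fib 3 \<le> fib a" by (intro fib_mono) simp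
  moreover have "fib 3 = 2" by (simp add: numeral_3_eq_3)
  ultimately show ?thesis using False by simp
qed (auto simp: le_Suc_eq numeral_2_eq_2)

lemma fib_minus_1_convolution_pow2:
  "(\<Sum>a=1..m. (int (fib a) - 1) * 2 ^ (m - a)) + (int (fib (m + 3)) - 1) = 2 ^ m"
proof (induction m)
  case 0
  then show ?case by (simp add: numeral_3_eq_3)
next
  case (Suc m)
  have "(\<Sum>a=1..Suc m. (int (fib a) - 1) * 2 ^ (Suc m - a)) =
      2 * (\<Sum>a=1..m. (int (fib a) - 1) * 2 ^ (m - a)) + (int (fib (Suc m)) - 1)"
    by (simp add: sum_distrib_left Suc_diff_le mult.left_commute)
  moreover have "fib (Suc m + 3) = fib (m + 3) + fib (Suc (Suc m))"
    and "fib (m + 3) = fib (Suc (Suc m)) + fib (Suc m)"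
    by (simp_all add: numeral_3_eq_3)
  ultimately show ?case using Suc.IH by simp
qed

lemma composition_sum_fib_minus_1:
  "composition_sum (\<lambda>a. int (fib a) - 1) n =
     (if n = 0 then 1 else if n < 3 then 0 else 2 ^ (n - 3))"
  (is "_ = ?h n")
proof (rule composition_sum_eqI)
  fix n :: nat
  assume "0 < n"
  show "?h n = (\<Sum>a=1..n. (int (fib a) - 1) * ?h (n - a))"
  proof (cases "n < 3")
    case True
    with \<open>0 < n\<close> have "n = 1 \<or> n = 2" by auto
    then show ?thesis by (auto simp: numeral_2_eq_2)
  next
    case False
    then obtain m where n: "n = m + 3" by (metis add.commute le_Suc_ex not_less)
    have "{1..m + 3} = insert (m + 3) (insert (m + 2) (insert (m + 1) {1..m}))" by auto
    then have "(\<Sum>a=1..n. (int (fib a) - 1) * ?h (n - a)) =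
        (int (fib (m + 3)) - 1) + (\<Sum>a=1..m. (int (fib a) - 1) * ?h (m + 3 - a))"
      unfolding n by simp
    also have "(\<Sum>a=1..m. (int (fib a) - 1) * ?h (m + 3 - a)) =
        (\<Sum>a=1..m. (int (fib a) - 1) * 2 ^ (m - a))"
      by (intro sum.cong refl) auto
    finally show ?thesis using fib_minus_1_convolution_pow2[of m] n by simp
  qed
qed simp

theorem mainTheorem17:
  fixes n :: nat
  assumes "n \<ge> 3"
  shows "(2::int) ^ (n - 3) =
           (\<Sum>as\<in>compositions n. \<Prod>a\<leftarrow>as. (int (fib a) - 1))
         \<and> (\<forall>as\<in>compositions n.
              (\<Prod>a\<leftarrow>as. (int (fib a) - 1)) \<noteq> 0 \<longleftrightarrow> (\<forall>a\<in>set as. a > 2))"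
proof
  show "(2::int) ^ (n - 3) = (\<Sum>as\<in>compositions n. \<Prod>a\<leftarrow>as. (int (fib a) - 1))"
    using composition_sum_fib_minus_1[of n] assms by (simp add: composition_sum_def)
next
  show "\<forall>as\<in>compositions n.
          (\<Prod>a\<leftarrow>as. (int (fib a) - 1)) \<noteq> 0 \<longleftrightarrow> (\<forall>a\<in>set as. a > 2)"
  proof
    fix as assume "as \<in> compositions n"
    then have "\<forall>a\<in>set as. int (fib a) - 1 = 0 \<longleftrightarrow> a \<le> 2"
      using fib_eq_1_iff by (auto simp: compositions_def)
    then show "(\<Prod>a\<leftarrow>as. (int (fib a) - 1)) \<noteq> 0 \<longleftrightarrow> (\<forall>a\<in>set as. a > 2)"
      by (auto simp: prod_list_zero_iff not_le)
  qed
qed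

end
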